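(* Assume that the following hold: (i) there exist positive finite constants $g_1,g_2$ such that for all large enough $r$, $\mathbb{E}[X_r]\in\mu r+[-g_1r^{1/3},-g_2r^{1/3}]$; (ii) there exist constants $\delta>0$, $C>0$, $r_1$ such that for all $r>r_1$, $\mathbb{P}(X_r-\mu r>Cr^{1/3})\ge\delta$. Then there exist constants $c>0$, $\eta>0$, $\theta_0$ and $r_0$ such that for all $r>r_0$ and $\theta_0<\theta<\eta r^{2/3}$, $$\mathbb{P}\left(X_r-\mathbb{E}[X_r]\ge\theta r^{1/3}\right)\ge\exp\left(-c\theta^{3/2}\right).$$
   Context: Let $\{\xi_v:v\in\mathbb{Z}^2\}$ be i.i.d. random variables with a common law $\nu$ supported on $[0,\infty)$. A directed path is an up-right nearest-neighbour path in $\mathbb{Z}^2$, and its weight is $\ell(\gamma)=\sum_{u\in\gamma}\xi_u$. For $u\preceq v$ coordinatewise, $X_{u,v}=\max_{\gamma:u\to v}\ell(\gamma)$ over directed paths from $u$ to $v$. For $r\in\mathbb{N}$, $X_r=X_{(1,1),(r,r)}$. It is assumed that $\mu=\lim_{r\to\infty}r^{-1}\mathbb{E}[X_r]<\infty$. *)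

theory Defs
  imports "HOL-Probability.Probability"
begin

type_synonym vertex = "int \<times> int"

definition up_right_step :: "vertex \<Rightarrow> vertex \<Rightarrow> bool" where
  "up_right_step u v \<longleftrightarrow> v = (fst u + 1, snd u) \<or> v = (fst u, snd u + 1)"

definition directed_paths :: "vertex \<Rightarrow> vertex \<Rightarrow> vertex list set" where
  "directed_paths u v = {\<gamma>. \<gamma> \<noteq> [] \<and> hd \<gamma> = u \<and> last \<gamma> = v \<and>
      (\<forall>i. i + 1 < length \<gamma> \<longrightarrow> up_right_step (\<gamma> ! i) (\<gamma> ! (i + 1)))}"

text \<open>Weight of a path: sum of the vertex weights (vertices of a directed path are distinct).\<close>
definition path_weight :: "(vertex \<Rightarrow> real) \<Rightarrow> vertex list \<Rightarrow> real" where
  "path_weight \<xi> \<gamma> = sum_list (map \<xi> \<gamma>)"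

definition lpp :: "(vertex \<Rightarrow> real) \<Rightarrow> vertex \<Rightarrow> vertex \<Rightarrow> real" where
  "lpp \<xi> u v = Max (path_weight \<xi> ` directed_paths u v)"

definition X :: "nat \<Rightarrow> (vertex \<Rightarrow> real) \<Rightarrow> real" where
  "X r \<xi> = lpp \<xi> (1, 1) (int r, int r)"

definition env :: "real measure \<Rightarrow> (vertex \<Rightarrow> real) measure" where
  "env \<nu> = PiM UNIV (\<lambda>_. \<nu>)"

end

theory Submission
  imports Defs
begin

text \<open>
  Cut the diagonal from (1, 1) to (r, r) into k consecutive diagonal squares of nearly equal
  side m = r div k. Gluing optimal paths of the squares shows that X r dominates the sum of the
  k square passage times; these are independent (disjoint sets of weights) and distributed like
  X m (translation invariance). By (ii), each of them exceeds \<mu> m + C m^(1/3) with probability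
  at least \<delta> once m > r1, so with probability at least \<delta>^k we get
  X r \<ge> \<mu> r + C k m^(1/3) \<approx> \<mu> r + C k^(2/3) r^(1/3). Since E X r \<le> \<mu> r for large r
  by the upper half of (i), the choice k \<approx> (2/C^3)^(1/2) \<theta>^(3/2) gives a deviation of
  \<theta> r^(1/3) with probability \<delta>^k = exp (- c \<theta>^(3/2)); the condition \<theta> < \<eta> r^(2/3)
  keeps m above r1.
\<close>

section \<open>Directed paths and last passage values\<close>

definition vertex_box :: "vertex \<Rightarrow> vertex \<Rightarrow> vertex set" where
  "vertex_box u v = {fst u..fst v} \<times> {snd u..snd v}"

lemma directed_path_step:
  "\<gamma> \<in> directed_paths u v \<Longrightarrow> i + 1 < length \<gamma> \<Longrightarrow> up_right_step (\<gamma> ! i) (\<gamma> ! (i + 1))"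
  unfolding directed_paths_def by blast

lemma directed_path_ends:
  assumes "\<gamma> \<in> directed_paths u v"
  shows "\<gamma> \<noteq> []" "\<gamma> ! 0 = u" "\<gamma> ! (length \<gamma> - 1) = v"
  using assms unfolding directed_paths_def by (auto simp: hd_conv_nth last_conv_nth)

lemma directed_path_coord_mono:
  assumes "\<gamma> \<in> directed_paths u v" "i + d < length \<gamma>"
  shows "fst (\<gamma> ! i) \<le> fst (\<gamma> ! (i + d)) \<and> snd (\<gamma> ! i) \<le> snd (\<gamma> ! (i + d))"
  using assms(2)
proof (induction d)
  case (Suc d)
  then have "up_right_step (\<gamma> ! (i + d)) (\<gamma> ! (i + d + 1))"
    using directed_path_step[OF assms(1)] by simp
  with Suc show ?case unfolding up_right_step_def by auto
qed simp

lemma directed_path_coord_sum: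
  assumes "\<gamma> \<in> directed_paths u v" "i < length \<gamma>"
  shows "fst (\<gamma> ! i) + snd (\<gamma> ! i) = fst u + snd u + int i"
  using assms(2)
proof (induction i)
  case 0
  then show ?case using directed_path_ends[OF assms(1)] by simp
next
  case (Suc i)
  then have "up_right_step (\<gamma> ! i) (\<gamma> ! (i + 1))"
    using directed_path_step[OF assms(1)] by simp
  with Suc show ?case unfolding up_right_step_def by auto
qed

lemma set_directed_path_subset_box:
  assumes "\<gamma> \<in> directed_paths u v"
  shows "set \<gamma> \<subseteq> vertex_box u v"
proof
  fix p assume "p \<in> set \<gamma>"
  then obtain i where i: "i < length \<gamma>" "p = \<gamma> ! i" by (auto simp: in_set_conv_nth)
  have "fst u \<le> fst p \<and> snd u \<le> snd p"
    using directed_path_coord_mono[OF assms, of 0 i] directed_path_ends[OF assms] i by simp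
  moreover have "fst p \<le> fst v \<and> snd p \<le> snd v"
    using directed_path_coord_mono[OF assms, of i "length \<gamma> - 1 - i"] directed_path_ends[OF assms] i
    by simp
  ultimately show "p \<in> vertex_box u v" unfolding vertex_box_def by (auto simp: mem_Times_iff)
qed

lemma length_directed_path:
  assumes "\<gamma> \<in> directed_paths u v"
  shows "length \<gamma> = nat (fst v + snd v - fst u - snd u) + 1"
  using directed_path_coord_sum[OF assms, of "length \<gamma> - 1"] directed_path_ends[OF assms]
  by (cases \<gamma>) auto

lemma finite_directed_paths: "finite (directed_paths u v)"
proof (rule finite_subset)
  let ?n = "nat (fst v + snd v - fst u - snd u) + 1"
  show "directed_paths u v \<subseteq> {xs. set xs \<subseteq> vertex_box u v \<and> length xs = ?n}"
    using set_directed_path_subset_box length_directed_path by blast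
  show "finite {xs. set xs \<subseteq> vertex_box u v \<and> length xs = ?n}"
    by (rule finite_lists_length_eq) (simp add: vertex_box_def)
qed

lemma singleton_directed_path: "[u] \<in> directed_paths u u"
  unfolding directed_paths_def by auto

lemma append_directed_paths:
  assumes \<gamma>1: "\<gamma>1 \<in> directed_paths u v" and \<gamma>2: "\<gamma>2 \<in> directed_paths v' w"
    and step: "up_right_step v v'"
  shows "\<gamma>1 @ \<gamma>2 \<in> directed_paths u w"
proof -
  have "up_right_step ((\<gamma>1 @ \<gamma>2) ! i) ((\<gamma>1 @ \<gamma>2) ! (i + 1))"
    if i: "i + 1 < length (\<gamma>1 @ \<gamma>2)" for i
  proof -
    consider "i + 1 < length \<gamma>1" | "i + 1 = length \<gamma>1" | "length \<gamma>1 \<le> i" by linarith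
    then show ?thesis
    proof cases
      case 1
      then show ?thesis using directed_path_step[OF \<gamma>1 1] by (simp add: nth_append)
    next
      case 2
      then have "i = length \<gamma>1 - 1" by simp
      with 2 show ?thesis
        using step directed_path_ends[OF \<gamma>1] directed_path_ends[OF \<gamma>2] by (simp add: nth_append)
    next
      case 3
      then have "i - length \<gamma>1 + 1 < length \<gamma>2" using i by simp
      from directed_path_step[OF \<gamma>2 this] 3 show ?thesis by (simp add: nth_append Suc_diff_le)
    qed
  qed
  then show ?thesis using \<gamma>1 \<gamma>2 unfolding directed_paths_def by auto
qed

lemma directed_paths_nonempty:
  assumes "fst u \<le> fst v" "snd u \<le> snd v"
  shows "directed_paths u v \<noteq> {}"
proof -
  have "directed_paths u v \<noteq> {}"
    if "fst u \<le> fst v" "snd u \<le> snd v" "nat (fst v + snd v - fst u - snd u) = n" for v n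
    using that
  proof (induction n arbitrary: v)
    case 0
    then have "v = u" by (simp add: prod_eq_iff)
    then show ?case using singleton_directed_path by blast
  next
    case (Suc n)
    define v' where "v' = (if fst u < fst v then (fst v - 1, snd v) else (fst v, snd v - 1))"
    have "fst u \<le> fst v'" "snd u \<le> snd v'" "nat (fst v' + snd v' - fst u - snd u) = n"
      using Suc.prems unfolding v'_def by auto
    then obtain \<gamma> where "\<gamma> \<in> directed_paths u v'" using Suc.IH by blast
    moreover have "up_right_step v' v" unfolding v'_def up_right_step_def by auto
    ultimately have "\<gamma> @ [v] \<in> directed_paths u v"
      using append_directed_paths singleton_directed_path by blast
    then show ?case by blast
  qed
  then show ?thesis using assms by blast
qed

lemma path_weight_append: "path_weight \<xi> (\<gamma>1 @ \<gamma>2) = path_weight \<xi> \<gamma>1 + path_weight \<xi> \<gamma>2"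
  unfolding path_weight_def by simp

lemma path_weight_le_lpp: "\<gamma> \<in> directed_paths u v \<Longrightarrow> path_weight \<xi> \<gamma> \<le> lpp \<xi> u v"
  unfolding lpp_def using finite_directed_paths by (intro Max_ge) auto

lemma lpp_attained:
  assumes "fst u \<le> fst v" "snd u \<le> snd v"
  obtains \<gamma> where "\<gamma> \<in> directed_paths u v" "lpp \<xi> u v = path_weight \<xi> \<gamma>"
proof -
  have "lpp \<xi> u v \<in> path_weight \<xi> ` directed_paths u v"
    unfolding lpp_def using finite_directed_paths directed_paths_nonempty[OF assms]
    by (intro Max_in) auto
  then show ?thesis using that by blast
qed

lemma lpp_concat:
  assumes "fst u \<le> fst v" "snd u \<le> snd v" "fst v' \<le> fst w" "snd v' \<le> snd w"
    and "up_right_step v v'"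
  shows "lpp \<xi> u v + lpp \<xi> v' w \<le> lpp \<xi> u w"
proof -
  obtain \<gamma>1 where \<gamma>1: "\<gamma>1 \<in> directed_paths u v" "lpp \<xi> u v = path_weight \<xi> \<gamma>1"
    using lpp_attained assms(1,2) by blast
  obtain \<gamma>2 where \<gamma>2: "\<gamma>2 \<in> directed_paths v' w" "lpp \<xi> v' w = path_weight \<xi> \<gamma>2"
    using lpp_attained assms(3,4) by blast
  have "\<gamma>1 @ \<gamma>2 \<in> directed_paths u w"
    using append_directed_paths[OF \<gamma>1(1) \<gamma>2(1) assms(5)] .
  then show ?thesis using \<gamma>1(2) \<gamma>2(2) path_weight_le_lpp path_weight_append by metis
qed

lemma lpp_diag_superadditive:
  fixes a b c :: int
  assumes "a \<le> b" "b < c" "0 \<le> \<xi> (b + 1, b)"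
  shows "lpp \<xi> (a, a) (b, b) + lpp \<xi> (b + 1, b + 1) (c, c) \<le> lpp \<xi> (a, a) (c, c)"
proof -
  \<comment> \<open>the two diagonal squares are joined through the vertex (b + 1, b)\<close>
  have "lpp \<xi> (b + 1, b + 1) (c, c) \<le> \<xi> (b + 1, b) + lpp \<xi> (b + 1, b + 1) (c, c)"
    using assms(3) by simp
  also have "\<dots> \<le> lpp \<xi> (b + 1, b) (b + 1, b) + lpp \<xi> (b + 1, b + 1) (c, c)"
    using path_weight_le_lpp[OF singleton_directed_path, of \<xi> "(b + 1, b)"]
    by (simp add: path_weight_def)
  also have "\<dots> \<le> lpp \<xi> (b + 1, b) (c, c)"
    using assms by (intro lpp_concat) (auto simp: up_right_step_def)
  finally have "lpp \<xi> (b + 1, b + 1) (c, c) \<le> lpp \<xi> (b + 1, b) (c, c)" .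
  moreover have "lpp \<xi> (a, a) (b, b) + lpp \<xi> (b + 1, b) (c, c) \<le> lpp \<xi> (a, a) (c, c)"
    using assms by (intro lpp_concat) (auto simp: up_right_step_def)
  ultimately show ?thesis by linarith
qed

section \<open>Diagonal blocks\<close>

definition block_offset :: "(nat \<Rightarrow> nat) \<Rightarrow> nat \<Rightarrow> int" where
  "block_offset n j = int (\<Sum>i<j. n i)"

definition block_box :: "(nat \<Rightarrow> nat) \<Rightarrow> nat \<Rightarrow> vertex set" where
  "block_box n j = vertex_box (block_offset n j + 1, block_offset n j + 1)
     (block_offset n (Suc j), block_offset n (Suc j))"

definition block_lpp :: "(vertex \<Rightarrow> real) \<Rightarrow> (nat \<Rightarrow> nat) \<Rightarrow> nat \<Rightarrow> real" where
  "block_lpp \<xi> n j = lpp \<xi> (block_offset n j + 1, block_offset n j + 1)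
     (block_offset n (Suc j), block_offset n (Suc j))"

lemma block_offset_Suc: "block_offset n (Suc j) = block_offset n j + int (n j)"
  by (simp add: block_offset_def)

lemma block_offset_mono: "i \<le> j \<Longrightarrow> block_offset n i \<le> block_offset n j"
  unfolding block_offset_def by (intro of_nat_mono sum_mono2) auto

lemma disjoint_family_block_box: "disjoint_family (block_box n)"
proof -
  have "block_box n i \<inter> block_box n j = {}" if "i < j" for i j
    using block_offset_mono[of "Suc i" j n] that
    by (auto simp: block_box_def vertex_box_def mem_Times_iff)
  then show ?thesis unfolding disjoint_family_on_def by (metis inf_commute linorder_neqE)
qed

lemma sum_block_lpp_le_X:
  assumes "\<And>p. 0 \<le> \<xi> p" "\<And>j. j < k \<Longrightarrow> 1 \<le> n j" "1 \<le> k"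
  shows "(\<Sum>j<k. block_lpp \<xi> n j) \<le> X (\<Sum>j<k. n j) \<xi>"
  using assms(3,2)
proof (induction k rule: nat_induct_at_least)
  case base
  then show ?case by (simp add: block_lpp_def block_offset_def X_def)
next
  case (Suc k)
  define b where "b = block_offset n k"
  have "1 \<le> b"
    using Suc.prems[of 0] Suc.hyps block_offset_mono[of 1 k n] by (simp add: b_def block_offset_def)
  moreover have "b < b + int (n k)" using Suc.prems[of k] by simp
  ultimately have "lpp \<xi> (1, 1) (b, b) + lpp \<xi> (b + 1, b + 1) (b + int (n k), b + int (n k))
      \<le> lpp \<xi> (1, 1) (b + int (n k), b + int (n k))"
    using assms(1) by (intro lpp_diag_superadditive) auto
  then have "X (\<Sum>j<k. n j) \<xi> + block_lpp \<xi> n k \<le> X (\<Sum>j<Suc k. n j) \<xi>"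
    by (simp add: X_def block_lpp_def block_offset_Suc b_def) (simp add: block_offset_def)
  then show ?case using Suc by simp
qed

definition diag_shift :: "int \<Rightarrow> vertex \<Rightarrow> vertex" where
  "diag_shift d p = (fst p + d, snd p + d)"

lemma inj_diag_shift: "inj (diag_shift d)"
  unfolding inj_on_def diag_shift_def by (auto simp: prod_eq_iff)

lemma map_diag_shift_directed_path:
  "\<gamma> \<in> directed_paths u v \<Longrightarrow> map (diag_shift d) \<gamma> \<in> directed_paths (diag_shift d u) (diag_shift d v)"
  unfolding directed_paths_def up_right_step_def diag_shift_def by (auto simp: hd_map last_map)

lemma directed_paths_diag_shift:
  "directed_paths (diag_shift d u) (diag_shift d v) = map (diag_shift d) ` directed_paths u v"
proof (intro equalityI subsetI)
  fix \<gamma> assume "\<gamma> \<in> directed_paths (diag_shift d u) (diag_shift d v)"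
  then have "map (diag_shift (- d)) \<gamma> \<in> directed_paths u v"
    using map_diag_shift_directed_path[of \<gamma> "diag_shift d u" "diag_shift d v" "- d"]
    by (simp add: diag_shift_def)
  moreover have "\<gamma> = map (diag_shift d) (map (diag_shift (- d)) \<gamma>)"
    by (simp add: diag_shift_def map_idI)
  ultimately show "\<gamma> \<in> map (diag_shift d) ` directed_paths u v" by blast
qed (auto intro: map_diag_shift_directed_path)

lemma lpp_diag_shift: "lpp \<xi> (diag_shift d u) (diag_shift d v) = lpp (\<xi> \<circ> diag_shift d) u v"
  unfolding lpp_def directed_paths_diag_shift image_image path_weight_def by simp

lemma block_lpp_eq_X_shift: "block_lpp \<xi> n j = X (n j) (\<xi> \<circ> diag_shift (block_offset n j))"
  using lpp_diag_shift[of \<xi> "block_offset n j" "(1, 1)" "(int (n j), int (n j))"]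
  by (simp add: block_lpp_def X_def diag_shift_def block_offset_Suc add.commute)

lemma lpp_cong_box:
  assumes "\<And>p. p \<in> vertex_box u v \<Longrightarrow> \<xi> p = \<xi>' p"
  shows "lpp \<xi> u v = lpp \<xi>' u v"
proof -
  have "path_weight \<xi> \<gamma> = path_weight \<xi>' \<gamma>" if "\<gamma> \<in> directed_paths u v" for \<gamma>
    using set_directed_path_subset_box[OF that] assms unfolding path_weight_def
    by (metis (no_types, lifting) map_eq_conv subsetD)
  then show ?thesis unfolding lpp_def by (metis image_cong)
qed

lemma borel_measurable_path_weight:
  assumes "sets \<nu> = sets borel" "set \<gamma> \<subseteq> K"
  shows "(\<lambda>\<xi>. path_weight \<xi> \<gamma>) \<in> borel_measurable (PiM K (\<lambda>_. \<nu>))"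
  using assms(2)
proof (induction \<gamma>)
  case (Cons p \<gamma>)
  have "(\<lambda>\<xi>. \<xi> p) \<in> borel_measurable (PiM K (\<lambda>_. \<nu>))"
    using Cons.prems measurable_component_singleton[of p K "\<lambda>_. \<nu>"]
    by (simp add: measurable_cong_sets[OF refl assms(1)])
  then show ?case using Cons by (simp add: path_weight_def)
qed (simp add: path_weight_def)

lemma borel_measurable_lpp:
  assumes "sets \<nu> = sets borel" "vertex_box u v \<subseteq> K"
  shows "(\<lambda>\<xi>. lpp \<xi> u v) \<in> borel_measurable (PiM K (\<lambda>_. \<nu>))"
  unfolding lpp_def
proof (rule borel_measurable_Max[OF finite_directed_paths])
  fix \<gamma> assume "\<gamma> \<in> directed_paths u v"
  then show "(\<lambda>\<xi>. path_weight \<xi> \<gamma>) \<in> borel_measurable (PiM K (\<lambda>_. \<nu>))"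
    using set_directed_path_subset_box assms by (blast intro: borel_measurable_path_weight)
qed

lemma borel_measurable_X: "sets \<nu> = sets borel \<Longrightarrow> X r \<in> borel_measurable (env \<nu>)"
  unfolding env_def X_def[abs_def] by (rule borel_measurable_lpp) auto

section \<open>Independence and stationarity of the blocks\<close>

lemma prob_space_env: "prob_space \<nu> \<Longrightarrow> prob_space (env \<nu>)"
  unfolding env_def by (rule prob_space_PiM) auto

lemma space_env: "sets \<nu> = sets borel \<Longrightarrow> space (env \<nu>) = UNIV"
  unfolding env_def space_PiM using sets_eq_imp_space_eq[of \<nu> borel] by simp

lemma measurable_env_diag_shift: "(\<lambda>\<xi>. \<xi> \<circ> diag_shift d) \<in> measurable (env \<nu>) (env \<nu>)"
proof -
  have "(\<lambda>\<xi>. \<lambda>p\<in>UNIV. \<xi> (diag_shift d p)) \<in> measurable (env \<nu>) (env \<nu>)"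
    unfolding env_def by (intro measurable_restrict measurable_component_singleton) auto
  then show ?thesis by (simp add: comp_def restrict_UNIV)
qed

lemma distr_env_diag_shift:
  assumes "prob_space \<nu>"
  shows "distr (env \<nu>) (env \<nu>) (\<lambda>\<xi>. \<xi> \<circ> diag_shift d) = env \<nu>"
  using distr_PiM_reindex[of UNIV "\<lambda>_. \<nu>" "diag_shift d" UNIV] assms inj_diag_shift
  by (simp add: env_def comp_def restrict_UNIV)

lemma indep_vars_env_coords:
  assumes "prob_space \<nu>" "sets \<nu> = sets borel"
  shows "prob_space.indep_vars (env \<nu>) (\<lambda>_. \<nu>) (\<lambda>p \<xi>. \<xi> p) UNIV"
proof -
  interpret E: prob_space "env \<nu>" using prob_space_env[OF assms(1)] .
  have "distr (env \<nu>) \<nu> (\<lambda>\<xi>. \<xi> p) = \<nu>" for p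
    unfolding env_def using distr_PiM_component[of UNIV "\<lambda>_. \<nu>"] assms(1) by auto
  moreover have "distr (env \<nu>) (env \<nu>) (\<lambda>\<xi>. \<lambda>p\<in>UNIV. \<xi> p) = env \<nu>"
    by (simp add: env_def restrict_UNIV distr_id2)
  ultimately show ?thesis
    by (subst E.indep_vars_iff_distr_eq_PiM) (auto simp: env_def)
qed

lemma prob_block_lpp_eq_prob_X:
  assumes "prob_space \<nu>" "sets \<nu> = sets borel"
  shows "measure (env \<nu>) {\<xi> \<in> space (env \<nu>). t < block_lpp \<xi> n j}
       = measure (env \<nu>) {\<xi> \<in> space (env \<nu>). t < X (n j) \<xi>}"
    (is "_ = measure _ ?B")
proof -
  let ?shift = "\<lambda>\<xi>. \<xi> \<circ> diag_shift (block_offset n j)"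
  note borel_measurable_X[OF assms(2), measurable]
  have B: "?B \<in> sets (env \<nu>)" by measurable
  have "{\<xi> \<in> space (env \<nu>). t < block_lpp \<xi> n j} = ?shift -` ?B \<inter> space (env \<nu>)"
    by (auto simp: block_lpp_eq_X_shift space_env[OF assms(2)])
  also have "measure (env \<nu>) \<dots> = measure (distr (env \<nu>) (env \<nu>) ?shift) ?B"
    by (rule measure_distr[symmetric, OF measurable_env_diag_shift B])
  finally show ?thesis by (simp only: distr_env_diag_shift[OF assms(1)])
qed

text \<open>Disjoint boxes see disjoint sets of independent weights.\<close>
lemma indep_vars_block_lpp:
  assumes "prob_space \<nu>" "sets \<nu> = sets borel"
  shows "prob_space.indep_vars (env \<nu>) (\<lambda>_. borel) (\<lambda>j \<xi>. block_lpp \<xi> n j) UNIV"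
proof -
  interpret E: prob_space "env \<nu>" using prob_space_env[OF assms(1)] .
  have "E.indep_vars (\<lambda>j. PiM (block_box n j) (\<lambda>_. \<nu>))
      (\<lambda>j \<xi>. restrict (\<lambda>p. \<xi> p) (block_box n j)) UNIV"
    using E.indep_vars_restrict[OF indep_vars_env_coords[OF assms] _ disjoint_family_block_box]
    by simp
  then have "E.indep_vars (\<lambda>_. borel)
      (\<lambda>j \<xi>. block_lpp (restrict (\<lambda>p. \<xi> p) (block_box n j)) n j) UNIV"
    by (rule E.indep_vars_compose2)
      (auto simp: block_lpp_def block_box_def intro: borel_measurable_lpp[OF assms(2)])
  moreover have "block_lpp (restrict (\<lambda>p. \<xi> p) (block_box n j)) n j = block_lpp \<xi> n j" for \<xi> j
    unfolding block_lpp_def by (rule lpp_cong_box) (simp add: block_box_def)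
  ultimately show ?thesis by simp
qed

lemma prob_X_ge_sum_blocks:
  assumes law: "prob_space \<nu>" "sets \<nu> = sets borel" and nonneg: "AE x in \<nu>. 0 \<le> x"
    and k: "1 \<le> k" and n: "\<And>j. j < k \<Longrightarrow> 1 \<le> n j" and "0 \<le> \<delta>"
    and block: "\<And>j. j < k \<Longrightarrow> \<delta> \<le> measure (env \<nu>) {\<xi> \<in> space (env \<nu>). t j < X (n j) \<xi>}"
  shows "\<delta> ^ k \<le> measure (env \<nu>) {\<xi> \<in> space (env \<nu>). (\<Sum>j<k. t j) \<le> X (\<Sum>j<k. n j) \<xi>}"
proof -
  interpret E: prob_space "env \<nu>" using prob_space_env[OF law(1)] .
  note borel_measurable_X[OF law(2), measurable]
  define A where "A j = {\<xi> \<in> space (env \<nu>). t j < block_lpp \<xi> n j}" for j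
  have A_eq: "A j = (\<lambda>\<xi>. block_lpp \<xi> n j) -` {t j<..} \<inter> space (env \<nu>)" for j
    unfolding A_def by auto
  have "\<delta> ^ k = (\<Prod>j<k. \<delta>)" by simp
  also have "\<dots> \<le> (\<Prod>j<k. E.prob (A j))"
    using block \<open>0 \<le> \<delta>\<close> by (intro prod_mono) (simp add: A_def prob_block_lpp_eq_prob_X[OF law])
  also have "\<dots> = E.prob (\<Inter>j<k. A j)"
    unfolding A_eq using k lessThan_empty_iff
    by (intro E.indep_varsD[OF indep_vars_block_lpp[OF law], symmetric]) auto
  also have "\<dots> \<le> E.prob {\<xi> \<in> space (env \<nu>). (\<Sum>j<k. t j) \<le> X (\<Sum>j<k. n j) \<xi>}"
  proof (rule E.finite_measure_mono_AE)
    have "AE \<xi> in env \<nu>. \<forall>p. 0 \<le> \<xi> p"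
      unfolding AE_all_countable env_def using nonneg law(1) by (auto intro: AE_PiM_component)
    then show "AE \<xi> in env \<nu>. \<xi> \<in> (\<Inter>j<k. A j) \<longrightarrow>
        \<xi> \<in> {\<xi> \<in> space (env \<nu>). (\<Sum>j<k. t j) \<le> X (\<Sum>j<k. n j) \<xi>}"
    proof eventually_elim
      case (elim \<xi>)
      show ?case
      proof
        assume "\<xi> \<in> (\<Inter>j<k. A j)"
        then have "(\<Sum>j<k. t j) \<le> (\<Sum>j<k. block_lpp \<xi> n j)"
          unfolding A_def by (intro sum_mono) (auto intro: less_imp_le)
        also have "\<dots> \<le> X (\<Sum>j<k. n j) \<xi>"
          using elim n k by (intro sum_block_lpp_le_X) auto
        finally show "\<xi> \<in> {\<xi> \<in> space (env \<nu>). (\<Sum>j<k. t j) \<le> X (\<Sum>j<k. n j) \<xi>}"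
          using space_env[OF law(2)] by simp
      qed
    qed
  qed measurable
  finally show ?thesis .
qed

lemma balanced_partition:
  assumes "1 \<le> k"
  obtains n :: "nat \<Rightarrow> nat" where "(\<Sum>j<k. n j) = r" "\<And>j. r div k \<le> n j"
proof
  let ?n = "\<lambda>j. r div k + (if j < r mod k then 1 else 0)"
  have "r mod k < k" using assms by simp
  then have "{..<k} \<inter> {j. j < r mod k} = {..<r mod k}" by auto
  then show "(\<Sum>j<k. ?n j) = r"
    by (simp add: sum.distrib sum.If_cases)
  show "r div k \<le> ?n j" for j by simp
qed

lemma prob_X_ge_mu_plus_block_fluctuations:
  assumes law: "prob_space \<nu>" "sets \<nu> = sets borel" and nonneg: "AE x in \<nu>. 0 \<le> x"
    and "0 \<le> C" "0 \<le> \<delta>"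
    and fluct: "\<And>n. r1 < n \<Longrightarrow>
      \<delta> \<le> measure (env \<nu>) {\<xi> \<in> space (env \<nu>). X n \<xi> - \<mu> * real n > C * real n powr (1/3)}"
    and k: "1 \<le> k" "(r1 + 1) * k \<le> r"
  shows "\<delta> ^ k \<le> measure (env \<nu>)
    {\<xi> \<in> space (env \<nu>). \<mu> * real r + C * real k * real (r div k) powr (1/3) \<le> X r \<xi>}"
proof -
  interpret E: prob_space "env \<nu>" using prob_space_env[OF law(1)] .
  note borel_measurable_X[OF law(2), measurable]
  obtain n where n_sum: "(\<Sum>j<k. n j) = r" and n_ge: "\<And>j. r div k \<le> n j"
    using balanced_partition[OF k(1)] by blast
  have "r1 < r div k"
    using div_le_mono[OF k(2), of k] k(1) by simp
  then have n_large: "r1 < n j" for j using n_ge[of j] by linarith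
  have n_pos: "1 \<le> n j" for j using n_large[of j] by linarith
  define t where "t j = \<mu> * real (n j) + C * real (n j) powr (1/3)" for j
  have "(\<Sum>j<k. t j) = \<mu> * real r + C * (\<Sum>j<k. real (n j) powr (1/3))"
    unfolding t_def sum.distrib using n_sum by (simp flip: sum_distrib_left of_nat_sum)
  moreover have "real k * real (r div k) powr (1/3) \<le> (\<Sum>j<k. real (n j) powr (1/3))"
    using sum_mono[of "{..<k}" "\<lambda>_. real (r div k) powr (1/3)"] n_ge by (simp add: powr_mono2)
  ultimately have "\<mu> * real r + C * real k * real (r div k) powr (1/3) \<le> (\<Sum>j<k. t j)"
    using \<open>0 \<le> C\<close> mult_left_mono by (fastforce simp: mult.assoc)
  then have "{\<xi> \<in> space (env \<nu>). (\<Sum>j<k. t j) \<le> X r \<xi>} \<subseteq>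
      {\<xi> \<in> space (env \<nu>). \<mu> * real r + C * real k * real (r div k) powr (1/3) \<le> X r \<xi>}"
    by auto
  moreover have "\<delta> ^ k \<le> E.prob {\<xi> \<in> space (env \<nu>). (\<Sum>j<k. t j) \<le> X r \<xi>}"
  proof -
    have "\<delta> \<le> E.prob {\<xi> \<in> space (env \<nu>). t j < X (n j) \<xi>}" for j
      using fluct[OF n_large[of j]] by (simp add: t_def algebra_simps)
    then show ?thesis
      using prob_X_ge_sum_blocks[OF law nonneg k(1), of n \<delta> t] n_pos n_sum \<open>0 \<le> \<delta>\<close> by simp
  qed
  moreover have "{\<xi> \<in> space (env \<nu>). \<mu> * real r + C * real k * real (r div k) powr (1/3) \<le> X r \<xi>}
      \<in> E.events" by measurable
  ultimately show ?thesis by (meson E.finite_measure_mono order_trans)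
qed

section \<open>Choosing the number of blocks\<close>

lemma mult_powr_third_le:
  fixes x y a b :: real
  assumes "0 \<le> a" "0 \<le> b" "0 \<le> y" "x ^ 3 * a \<le> y ^ 3 * b"
  shows "x * a powr (1/3) \<le> y * b powr (1/3)"
proof (rule power_le_imp_le_base)
  have "(z powr (1/3)) ^ 3 = z" if "0 \<le> z" for z :: real
    using that root_powr_inverse[of 3 z] real_root_pow_pos2[of 3 z] by simp
  then show "(x * a powr (1/3)) ^ Suc 2 \<le> (y * b powr (1/3)) ^ Suc 2"
    using assms by (simp add: power_mult_distrib)
  show "0 \<le> y * b powr (1/3)" using assms by simp
qed

lemma cube_root_block_bound:
  fixes \<theta> C :: real
  assumes "0 \<le> \<theta>" "0 \<le> C" "1 \<le> k" "k \<le> r" and k_large: "2 * \<theta> ^ 3 \<le> C ^ 3 * real k ^ 2"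
  shows "\<theta> * real r powr (1/3) \<le> C * real k * real (r div k) powr (1/3)"
proof (rule mult_powr_third_le)
  have "1 \<le> r div k" using div_le_mono[OF \<open>k \<le> r\<close>, of k] assms(3) by simp
  moreover have "r = k * (r div k) + r mod k" "r mod k < k" using assms(3) by simp_all
  ultimately have "r \<le> 2 * k * (r div k)"
    using mult_le_mono2[of 1 "r div k" k] by linarith
  then have "real r \<le> 2 * real k * real (r div k)"
    using of_nat_mono by fastforce
  then have "\<theta> ^ 3 * real r \<le> \<theta> ^ 3 * (2 * real k * real (r div k))"
    using assms(1) by (intro mult_left_mono) auto
  also have "\<dots> = (2 * \<theta> ^ 3) * (real k * real (r div k))" by simp
  also have "\<dots> \<le> (C ^ 3 * real k ^ 2) * (real k * real (r div k))"
    using k_large by (intro mult_right_mono) auto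
  also have "\<dots> = (C * real k) ^ 3 * real (r div k)"
    by (simp add: power_mult_distrib power2_eq_square power3_eq_cube mult_ac)
  finally show "\<theta> ^ 3 * real r \<le> (C * real k) ^ 3 * real (r div k)" .
qed (use assms(2) in simp_all)

lemma exp_ln_le_power:
  fixes \<delta> b :: real
  assumes "0 < \<delta>" "\<delta> \<le> 1" "real k \<le> b"
  shows "exp (b * ln \<delta>) \<le> \<delta> ^ k"
proof -
  have "b * ln \<delta> \<le> real k * ln \<delta>"
    using assms by (intro mult_right_mono_neg) auto
  then have "exp (b * ln \<delta>) \<le> exp (real k * ln \<delta>)" by simp
  also have "\<dots> = \<delta> ^ k" using assms(1) by (simp add: exp_of_nat_mult)
  finally show ?thesis .
qed

lemma nat_between_scaled:
  fixes a T :: real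
  assumes "0 < a" "1 \<le> T"
  obtains k :: nat where "1 \<le> k" "a * T \<le> real k" "real k \<le> (a + 1) * T"
proof
  let ?k = "nat \<lceil>a * T\<rceil>"
  have "0 < a * T" using assms by simp
  then have k: "real ?k = of_int \<lceil>a * T\<rceil>" by simp
  then show k_ge: "a * T \<le> real ?k" by simp
  have "real ?k < a * T + 1" using k ceiling_correct[of "a * T"] by linarith
  then show "real ?k \<le> (a + 1) * T" using assms by (simp add: algebra_simps)
  show "1 \<le> ?k" using \<open>0 < a * T\<close> k_ge by linarith
qed

lemma prob_upper_deviation_ge_exp:
  assumes law: "prob_space \<nu>" "sets \<nu> = sets borel" and nonneg: "AE x in \<nu>. 0 \<le> x"
    and C: "0 < C" and \<delta>: "0 < \<delta>" "\<delta> \<le> 1"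
    and fluct: "\<And>n. r1 < n \<Longrightarrow>
      \<delta> \<le> measure (env \<nu>) {\<xi> \<in> space (env \<nu>). X n \<xi> - \<mu> * real n > C * real n powr (1/3)}"
    and mean: "(\<integral>\<xi>. X r \<xi> \<partial>env \<nu>) \<le> \<mu> * real r"
    and a: "0 < a" "2 \<le> C ^ 3 * a ^ 2"
    and \<theta>: "1 < \<theta>" and r: "(real r1 + 1) * (a + 1) * \<theta> powr (3/2) \<le> real r"
  shows "exp (- ((a + 1) * - ln \<delta> + 1) * \<theta> powr (3/2)) \<le> measure (env \<nu>)
    {\<xi> \<in> space (env \<nu>). X r \<xi> - (\<integral>\<xi>'. X r \<xi>' \<partial>env \<nu>) \<ge> \<theta> * real r powr (1/3)}"
proof -
  interpret E: prob_space "env \<nu>" using prob_space_env[OF law(1)] .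
  note borel_measurable_X[OF law(2), measurable]
  define T where "T = \<theta> powr (3/2)"
  have T: "1 \<le> T" using \<theta> by (simp add: T_def ge_one_powr_ge_zero)
  have T_sq: "T ^ 2 = \<theta> ^ 3"
    using \<theta> by (simp add: T_def power2_eq_square powr_numeral flip: powr_add)
  obtain k where k: "1 \<le> k" and k_ge: "a * T \<le> real k" and k_le: "real k \<le> (a + 1) * T"
    using nat_between_scaled[OF a(1) T] .
  have "(real r1 + 1) * real k \<le> (real r1 + 1) * ((a + 1) * T)"
    by (rule mult_left_mono[OF k_le]) simp
  then have "real ((r1 + 1) * k) \<le> real r"
    using r unfolding T_def of_nat_mult of_nat_add of_nat_1 mult.assoc by linarith
  then have rk: "(r1 + 1) * k \<le> r" by (simp only: of_nat_le_iff)
  have "2 * \<theta> ^ 3 \<le> (C ^ 3 * a ^ 2) * \<theta> ^ 3"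
    using \<theta> by (intro mult_right_mono[OF a(2)]) simp
  also have "\<dots> = C ^ 3 * (a * T) ^ 2" by (simp add: power_mult_distrib T_sq)
  also have "\<dots> \<le> C ^ 3 * real k ^ 2"
    using k_ge a T C by (intro mult_left_mono power_mono) auto
  finally have "\<theta> * real r powr (1/3) \<le> C * real k * real (r div k) powr (1/3)"
    using \<theta> C k rk by (intro cube_root_block_bound) (auto intro: order_trans[OF _ rk])
  with mean have "{\<xi> \<in> space (env \<nu>). \<mu> * real r + C * real k * real (r div k) powr (1/3) \<le> X r \<xi>}
      \<subseteq> {\<xi> \<in> space (env \<nu>). X r \<xi> - (\<integral>\<xi>'. X r \<xi>' \<partial>env \<nu>) \<ge> \<theta> * real r powr (1/3)}"
    by auto
  then have "E.prob {\<xi> \<in> space (env \<nu>). \<mu> * real r + C * real k * real (r div k) powr (1/3) \<le> X r \<xi>}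
      \<le> E.prob {\<xi> \<in> space (env \<nu>). X r \<xi> - (\<integral>\<xi>'. X r \<xi>' \<partial>env \<nu>) \<ge> \<theta> * real r powr (1/3)}"
    by (rule E.finite_measure_mono) measurable
  moreover have "\<delta> ^ k \<le> E.prob
      {\<xi> \<in> space (env \<nu>). \<mu> * real r + C * real k * real (r div k) powr (1/3) \<le> X r \<xi>}"
    using prob_X_ge_mu_plus_block_fluctuations[OF law nonneg _ _ fluct k rk] C \<delta> by simp
  moreover have "exp (- ((a + 1) * - ln \<delta> + 1) * T) \<le> exp ((a + 1) * T * ln \<delta>)"
    using T by (simp add: algebra_simps)
  ultimately show ?thesis
    using exp_ln_le_power[OF \<delta>, of k "(a + 1) * T"] k_le unfolding T_def by linarith
qed

lemma upper_tail_lower_bound: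
  assumes law: "prob_space \<nu>" "sets \<nu> = sets borel" and nonneg: "AE x in \<nu>. 0 \<le> x"
    and \<delta>: "0 < \<delta>" and C: "0 < C"
    and fluct: "\<And>n. r1 < n \<Longrightarrow>
      \<delta> \<le> measure (env \<nu>) {\<xi> \<in> space (env \<nu>). X n \<xi> - \<mu> * real n > C * real n powr (1/3)}"
    and mean: "\<forall>\<^sub>F r in sequentially. (\<integral>\<xi>. X r \<xi> \<partial>env \<nu>) \<le> \<mu> * real r"
  shows "\<exists>c \<eta> \<theta>0 r0. 0 < c \<and> 0 < \<eta> \<and> 0 \<le> \<theta>0 \<and>
       (\<forall>r::nat. \<forall>\<theta>::real. r > r0 \<and> \<theta>0 < \<theta> \<and> \<theta> < \<eta> * real r powr (2/3) \<longrightarrow>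
          measure (env \<nu>) {\<xi> \<in> space (env \<nu>).
             X r \<xi> - (\<integral>\<xi>'. X r \<xi>' \<partial>env \<nu>) \<ge> \<theta> * real r powr (1/3)}
          \<ge> exp (- c * \<theta> powr (3/2)))"
proof -
  interpret E: prob_space "env \<nu>" using prob_space_env[OF law(1)] .
  have "\<delta> \<le> 1" using fluct[of "Suc r1"] E.prob_le_1 by (meson lessI order_trans)
  obtain N where mean_N: "\<And>r. N \<le> r \<Longrightarrow> (\<integral>\<xi>. X r \<xi> \<partial>env \<nu>) \<le> \<mu> * real r"
    using mean by (auto simp: eventually_sequentially)
  define a where "a = sqrt (2 / C ^ 3)"
  define q where "q = 1 / ((real r1 + 1) * (a + 1))"
  have a: "0 < a" "2 \<le> C ^ 3 * a ^ 2" using C by (simp_all add: a_def)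
  have q: "0 < q" "(real r1 + 1) * (a + 1) * q = 1" using a by (simp_all add: q_def)
  \<comment> \<open>the summand 1 in c keeps c positive when \<delta> = 1\<close>
  show ?thesis
  proof (rule exI[of _ "(a + 1) * - ln \<delta> + 1"], rule exI[of _ "q powr (2/3)"],
      rule exI[of _ 1], rule exI[of _ N], intro conjI allI impI)
    fix r :: nat and \<theta> :: real
    assume r\<theta>: "N < r \<and> 1 < \<theta> \<and> \<theta> < q powr (2/3) * real r powr (2/3)"
    then have "\<theta> powr (3/2) < ((q * real r) powr (2/3)) powr (3/2)"
      using q by (intro powr_less_mono2) (auto simp: powr_mult)
    also have "\<dots> = q * real r" using q by (simp add: powr_powr)
    finally have "(real r1 + 1) * (a + 1) * \<theta> powr (3/2) \<le> real r"
      using q mult_strict_left_mono[of _ "q * real r" "(real r1 + 1) * (a + 1)"] a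
      by (fastforce simp: mult.assoc[symmetric])
    with r\<theta> show "exp (- ((a + 1) * - ln \<delta> + 1) * \<theta> powr (3/2)) \<le> measure (env \<nu>)
        {\<xi> \<in> space (env \<nu>). X r \<xi> - (\<integral>\<xi>'. X r \<xi>' \<partial>env \<nu>) \<ge> \<theta> * real r powr (1/3)}"
      by (intro prob_upper_deviation_ge_exp[OF law nonneg C \<delta> \<open>\<delta> \<le> 1\<close> fluct mean_N a]) auto
  qed (use a q \<delta> \<open>\<delta> \<le> 1\<close> mult_nonneg_nonpos[of "a + 1" "ln \<delta>"] in auto)
qed

theorem theorem2:
  fixes \<nu> :: "real measure" and \<mu> :: real
  assumes law: "prob_space \<nu>" "sets \<nu> = sets borel"
    and nonneg: "AE x in \<nu>. 0 \<le> x"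
    and integ: "\<And>r. r \<ge> 1 \<Longrightarrow> integrable (env \<nu>) (X r)"
    and mu: "(\<lambda>r. (\<integral>\<xi>. X r \<xi> \<partial>env \<nu>) / real r) \<longlonglongrightarrow> \<mu>"
    and hyp_i: "\<exists>g1 g2. 0 < g1 \<and> 0 < g2 \<and>
       (\<forall>\<^sub>F r in sequentially.
          \<mu> * real r - g1 * real r powr (1/3) \<le> (\<integral>\<xi>. X r \<xi> \<partial>env \<nu>) \<and>
          (\<integral>\<xi>. X r \<xi> \<partial>env \<nu>) \<le> \<mu> * real r - g2 * real r powr (1/3))"
    and hyp_ii: "\<exists>\<delta> C r1. 0 < \<delta> \<and> 0 < C \<and>
       (\<forall>r::nat. r > r1 \<longrightarrow>
          measure (env \<nu>) {\<xi> \<in> space (env \<nu>). X r \<xi> - \<mu> * real r > C * real r powr (1/3)} \<ge> \<delta>)"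
  shows "\<exists>c \<eta> \<theta>0 r0. 0 < c \<and> 0 < \<eta> \<and> 0 \<le> \<theta>0 \<and>
       (\<forall>r::nat. \<forall>\<theta>::real. r > r0 \<and> \<theta>0 < \<theta> \<and> \<theta> < \<eta> * real r powr (2/3) \<longrightarrow>
          measure (env \<nu>) {\<xi> \<in> space (env \<nu>).
             X r \<xi> - (\<integral>\<xi>'. X r \<xi>' \<partial>env \<nu>) \<ge> \<theta> * real r powr (1/3)}
          \<ge> exp (- c * \<theta> powr (3/2)))"
proof -
  obtain \<delta> C r1 where "0 < \<delta>" "0 < C" and fluct: "\<And>n. r1 < n \<Longrightarrow>
      \<delta> \<le> measure (env \<nu>) {\<xi> \<in> space (env \<nu>). X n \<xi> - \<mu> * real n > C * real n powr (1/3)}"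
    using hyp_ii by blast
  moreover have "\<forall>\<^sub>F r in sequentially. (\<integral>\<xi>. X r \<xi> \<partial>env \<nu>) \<le> \<mu> * real r"
  proof -
    from hyp_i obtain g1 g2 where g2: "0 < g2" and "\<forall>\<^sub>F r in sequentially.
        \<mu> * real r - g1 * real r powr (1/3) \<le> (\<integral>\<xi>. X r \<xi> \<partial>env \<nu>) \<and>
        (\<integral>\<xi>. X r \<xi> \<partial>env \<nu>) \<le> \<mu> * real r - g2 * real r powr (1/3)" by blast
    then show ?thesis
    proof (elim eventually_mono conjE)
      fix r :: nat
      assume "(\<integral>\<xi>. X r \<xi> \<partial>env \<nu>) \<le> \<mu> * real r - g2 * real r powr (1/3)"
      moreover have "0 \<le> g2 * real r powr (1/3)" using g2 by simp
      ultimately show "(\<integral>\<xi>. X r \<xi> \<partial>env \<nu>) \<le> \<mu> * real r" by linarith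
    qed
  qed
  ultimately show ?thesis by (rule upper_tail_lower_bound[OF law nonneg])
qed

end
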